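(* Let $\rho=12\cdots(k-1)k^a$ for some $a\ge1$, $k\ge1$ (a strictly increasing run $1,\dots,k$ followed by $a-1$ further copies of $k$). If patterns $\sigma$ and $\tau$ are strongly partition equivalent, then $p_n(\rho,\sigma)=p_n(\rho,\tau)$ for all $n\ge0$.
   Context: Set partitions are written in canonical sequential form (restricted growth words; $\pi_j$ is the index of the block containing $j$, blocks ordered by their minima, so the $i$-th block is the set of positions carrying letter $i$). Pattern containment means having a subsequence order-isomorphic to the pattern. $p_n(T)$ is the number of partitions of $[n]$ avoiding all patterns in $T$. Patterns $\sigma,\tau$ are strongly partition equivalent if there is a bijection $f$ from $\sigma$-avoiding partitions to $\tau$-avoiding partitions such that for every $\sigma$-avoiding partition $\pi$, $f(\pi)$ has the same number of blocks as $\pi$ and for each $i$ the $i$-th block of $f(\pi)$ has the same size as the $i$-th block of $\pi$. *)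

theory Defs
  imports Main
begin

fun rgf_aux :: "nat \<Rightarrow> nat list \<Rightarrow> bool" where
  "rgf_aux m [] = True"
| "rgf_aux m (x # xs) = (1 \<le> x \<and> x \<le> Suc m \<and> rgf_aux (max m x) xs)"

definition rgf :: "nat list \<Rightarrow> bool" where
  "rgf w = rgf_aux 0 w"

definition order_iso :: "nat list \<Rightarrow> nat list \<Rightarrow> bool" where
  "order_iso u v = (length u = length v \<and>
     (\<forall>i < length u. \<forall>j < length u. (u ! i < u ! j \<longleftrightarrow> v ! i < v ! j)))"

definition contains :: "nat list \<Rightarrow> nat list \<Rightarrow> bool" where
  "contains w p = (\<exists>I. order_iso (nths w I) p)"

definition avoids :: "nat list \<Rightarrow> nat list set \<Rightarrow> bool" where
  "avoids w T = (\<forall>p \<in> T. \<not> contains w p)"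

definition pn :: "nat \<Rightarrow> nat list set \<Rightarrow> nat" where
  "pn n T = card {w. length w = n \<and> rgf w \<and> avoids w T}"

definition block :: "nat list \<Rightarrow> nat \<Rightarrow> nat set" where
  "block w i = {j. j < length w \<and> w ! j = i}"

definition num_blocks :: "nat list \<Rightarrow> nat" where
  "num_blocks w = card (set w)"

definition strongly_equiv :: "nat list \<Rightarrow> nat list \<Rightarrow> bool" where
  "strongly_equiv \<sigma> \<tau> = (\<exists>f. bij_betw f {w. rgf w \<and> \<not> contains w \<sigma>} {w. rgf w \<and> \<not> contains w \<tau>}
     \<and> (\<forall>\<pi>. rgf \<pi> \<and> \<not> contains \<pi> \<sigma> \<longrightarrow>
          num_blocks (f \<pi>) = num_blocks \<pi> \<and> (\<forall>i. card (block (f \<pi>) i) = card (block \<pi> i))))"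

end

theory Submission
  imports Defs "HOL-Library.Sublist" "HOL-Library.Multiset"
begin

text \<open>A partition contains \<open>1 2 \<dots> (k-1) k\<^sup>a\<close> exactly when some block numbered \<open>k\<close> or later
has at least \<open>a\<close> elements. In a restricted growth word the minima of blocks \<open>1, \<dots>, i-1\<close> precede
the first element of block \<open>i\<close> in increasing order, so such a block yields an occurrence;
conversely, in an occurrence the first \<open>k-1\<close> letters strictly increase from at least 1, so the
plateau \<open>k\<^sup>a\<close> is realised inside one block numbered \<open>\<ge> k\<close>. Thus avoiding this pattern, like the
length, depends only on the block sizes, and a strong equivalence restricts to a bijection between
the partitions of \<open>[n]\<close> counted on either side.\<close>

lemma count_list_eq_card_block: "count_list w i = card (block w i)"
  by (simp add: block_def count_list_eq_length_filter length_filter_conv_card eq_commute)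

lemma replicate_count_list_eq_filter: "replicate (count_list w x) x = filter (\<lambda>y. y = x) w"
  by (induction w) auto

lemma count_list_subseq_le: "subseq s w \<Longrightarrow> count_list s x \<le> count_list w x"
  by (metis count_list_eq_length_filter list_emb_length subseq_filter)

lemma contains_if_subseq: "subseq u w \<Longrightarrow> order_iso u p \<Longrightarrow> contains w p"
  unfolding contains_def by (metis subseq_conv_nths)

lemma prefix_upt_upt: "i \<le> j \<Longrightarrow> prefix [m..<i] [m..<j]"
proof (cases "m \<le> i")
  case True
  assume "i \<le> j"
  then have "[m..<j] = [m..<i] @ [i..<j]"
    using True upt_add_eq_append[of m i "j - i"] by simp
  then show ?thesis by (rule prefixI)
qed simp

lemma prefix_replicate_replicate: "m \<le> n \<Longrightarrow> prefix (replicate m x) (replicate n x)"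
  by (metis le_add_diff_inverse prefixI replicate_add)

lemma rgf_aux_append: "rgf_aux m (u @ v) \<longleftrightarrow> rgf_aux m u \<and> rgf_aux (foldl max m u) v"
  by (induction u arbitrary: m) auto

lemma rgf_aux_ge1: "rgf_aux m w \<Longrightarrow> x \<in> set w \<Longrightarrow> 1 \<le> x"
  by (induction w arbitrary: m) auto

lemma rgf_aux_upt_subseq: "rgf_aux m u \<Longrightarrow> subseq [Suc m..<Suc (foldl max m u)] u"
proof (induction u arbitrary: m)
  case Nil
  then show ?case by simp
next
  case (Cons x xs)
  show ?case
  proof (cases "x = Suc m")
    case True
    with Cons have IH: "subseq [Suc (Suc m)..<Suc (foldl max (Suc m) xs)] xs" by fastforce
    have "Suc m \<le> foldl max (Suc m) xs"
      by (induction xs rule: rev_induct) auto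
    then have "[Suc m..<Suc (foldl max (Suc m) xs)] = Suc m # [Suc (Suc m)..<Suc (foldl max (Suc m) xs)]"
      by (simp add: upt_conv_Cons)
    with IH True show ?thesis by simp
  next
    case False
    with Cons have "max m x = m" by auto
    with Cons show ?thesis by (metis rgf_aux.simps(2) foldl_Cons list_emb_Cons)
  qed
qed

lemma rgf_upt_replicate_subseq:
  assumes "rgf w" and "i \<in> set w"
  shows "subseq ([1..<i] @ replicate (count_list w i) i) w"
proof -
  define u where "u = takeWhile (\<lambda>x. x \<noteq> i) w"
  define v where "v = dropWhile (\<lambda>x. x \<noteq> i) w"
  have w: "w = u @ v" by (simp add: u_def v_def)
  have "v \<noteq> []" using assms(2) by (simp add: v_def dropWhile_eq_Nil_conv)
  moreover have "hd v = i" using hd_dropWhile[of "\<lambda>x. x \<noteq> i" w] \<open>v \<noteq> []\<close> by (simp add: v_def)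
  ultimately obtain v' where v: "v = i # v'" by (cases v) auto
  have u_rgf: "rgf_aux 0 u" and v_rgf: "rgf_aux (foldl max 0 u) v"
    using assms(1) w rgf_aux_append unfolding rgf_def by auto
  have "i \<le> Suc (foldl max 0 u)" using v_rgf v by simp
  then have "subseq [1..<i] [1..<Suc (foldl max 0 u)]"
    by (intro prefix_imp_subseq prefix_upt_upt)
  also have "subseq \<dots> u" using rgf_aux_upt_subseq[OF u_rgf] by simp
  finally have prefix_part: "subseq [1..<i] u" .
  have "i \<notin> set u" unfolding u_def by (metis set_takeWhileD)
  then have "filter (\<lambda>x. x = i) u = []" by (auto simp: filter_empty_conv)
  then have "replicate (count_list w i) i = filter (\<lambda>x. x = i) v"
    using w replicate_count_list_eq_filter[of w i] by simp
  then have block_part: "subseq (replicate (count_list w i) i) v"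
    using subseq_filter_left by metis
  from list_emb_append_mono[OF prefix_part block_part] w show ?thesis by simp
qed

lemma order_iso_upt_replicate:
  assumes "k \<le> i"
  shows "order_iso ([1..<k] @ replicate a i) ([1..<k] @ replicate a k)"
proof -
  have nth: "([1..<k] @ replicate a c) ! j = (if j < k - 1 then Suc j else c)"
    if "j < k - 1 + a" for c j
    using that by (auto simp: nth_append)
  show ?thesis unfolding order_iso_def
  proof (intro conjI allI impI)
    fix p q assume "p < length ([1..<k] @ replicate a i)" "q < length ([1..<k] @ replicate a i)"
    then have p_lt: "p < k - 1 + a" and q_lt: "q < k - 1 + a" by auto
    then show "([1..<k] @ replicate a i) ! p < ([1..<k] @ replicate a i) ! q \<longleftrightarrow>
        ([1..<k] @ replicate a k) ! p < ([1..<k] @ replicate a k) ! q"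
      unfolding nth[OF p_lt] nth[OF q_lt] using assms by auto
  qed simp
qed

lemma order_iso_upt_replicate_count:
  assumes iso: "order_iso s ([1..<k] @ replicate a k)"
    and pos: "\<forall>x\<in>set s. 1 \<le> x" and "1 \<le> k" and "1 \<le> a"
  shows "\<exists>i\<ge>k. a \<le> count_list s i"
proof -
  define \<rho> where "\<rho> = [1..<k] @ replicate a k"
  have len: "length s = k - 1 + a" using iso by (simp add: order_iso_def)
  have cmp: "s ! p < s ! q \<longleftrightarrow> \<rho> ! p < \<rho> ! q" if "p < length s" "q < length s" for p q
    using iso that unfolding order_iso_def \<rho>_def by blast
  have \<rho>_nth: "\<rho> ! j = (if j < k - 1 then Suc j else k)" if "j < k - 1 + a" for j
    using that by (auto simp: \<rho>_def nth_append)
  define i where "i = s ! (k - 1)"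
  have increasing: "Suc j \<le> s ! j" if "j < k" for j
    using that
  proof (induction j)
    case 0
    have "0 < length s" using len assms(4) by simp
    then show ?case using pos nth_mem by fastforce
  next
    case (Suc j)
    then have "s ! j < s ! Suc j" using cmp[of j "Suc j"] \<rho>_nth len assms(4) by auto
    with Suc show ?case by auto
  qed
  have "k \<le> i" using increasing[of "k - 1"] assms(3) by (simp add: i_def)
  have plateau: "s ! j = i" if "k - 1 \<le> j" "j < k - 1 + a" for j
    using cmp[of j "k - 1"] cmp[of "k - 1" j] \<rho>_nth[of j] \<rho>_nth[of "k - 1"] that len assms(4)
    by (auto simp: i_def)
  have "a = card {k - 1..<k - 1 + a}" by simp
  also have "\<dots> \<le> card {j. j < length s \<and> s ! j = i}"
    using plateau len by (intro card_mono) auto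
  also have "\<dots> = count_list s i"
    by (simp add: count_list_eq_length_filter length_filter_conv_card eq_commute)
  finally show ?thesis using \<open>k \<le> i\<close> by blast
qed

lemma rgf_contains_upt_replicate_iff:
  assumes "rgf w" and "1 \<le> k" and "1 \<le> a"
  shows "contains w ([1..<k] @ replicate a k) \<longleftrightarrow> (\<exists>i\<ge>k. a \<le> count_list w i)"
proof
  assume "contains w ([1..<k] @ replicate a k)"
  then obtain I where iso: "order_iso (nths w I) ([1..<k] @ replicate a k)"
    unfolding contains_def by blast
  have "\<forall>x\<in>set (nths w I). 1 \<le> x"
    using rgf_aux_ge1[OF assms(1)[unfolded rgf_def]] set_nths_subset[of w I] by blast
  then obtain i where "k \<le> i" and "a \<le> count_list (nths w I) i"
    using order_iso_upt_replicate_count[OF iso _ assms(2,3)] by blast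
  moreover have "count_list (nths w I) i \<le> count_list w i"
    by (rule count_list_subseq_le) (auto simp: subseq_conv_nths)
  ultimately show "\<exists>i\<ge>k. a \<le> count_list w i" by (meson le_trans)
next
  assume "\<exists>i\<ge>k. a \<le> count_list w i"
  then obtain i where "k \<le> i" and a_le: "a \<le> count_list w i" by blast
  with assms(3) have "count_list w i \<noteq> 0" by linarith
  then have "i \<in> set w" by (simp add: count_list_0_iff)
  have "subseq ([1..<k] @ replicate a i) ([1..<i] @ replicate (count_list w i) i)"
    using prefix_imp_subseq[OF prefix_upt_upt[OF \<open>k \<le> i\<close>]]
      prefix_imp_subseq[OF prefix_replicate_replicate[OF a_le]]
    by (rule list_emb_append_mono)
  also have "subseq \<dots> w" by (rule rgf_upt_replicate_subseq[OF assms(1) \<open>i \<in> set w\<close>])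
  finally show "contains w ([1..<k] @ replicate a k)"
    using contains_if_subseq order_iso_upt_replicate[OF \<open>k \<le> i\<close>] by blast
qed

lemma rgf_contains_upt_replicate_mset_cong:
  assumes "rgf v" and "rgf w" and "mset v = mset w" and "1 \<le> k" and "1 \<le> a"
  shows "contains v ([1..<k] @ replicate a k) \<longleftrightarrow> contains w ([1..<k] @ replicate a k)"
proof -
  have "count_list v i = count_list w i" for i
    using assms(3) by (metis count_mset)
  then show ?thesis
    using rgf_contains_upt_replicate_iff[OF assms(1) assms(4,5)]
      rgf_contains_upt_replicate_iff[OF assms(2) assms(4,5)] by simp
qed

lemma card_filter_eq_if_bij_betw:
  assumes "bij_betw f A B" and "\<And>x. x \<in> A \<Longrightarrow> P (f x) \<longleftrightarrow> P x"
  shows "card {x\<in>A. P x} = card {y\<in>B. P y}"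
proof (rule bij_betw_same_card)
  show "bij_betw f {x\<in>A. P x} {y\<in>B. P y}"
    using assms unfolding bij_betw_def by (auto simp: inj_on_def image_iff)
qed

lemma strongly_equiv_obtains_mset_preserving:
  assumes "strongly_equiv \<sigma> \<tau>"
  obtains f where "bij_betw f {w. rgf w \<and> \<not> contains w \<sigma>} {w. rgf w \<and> \<not> contains w \<tau>}"
    and "\<And>\<pi>. rgf \<pi> \<Longrightarrow> \<not> contains \<pi> \<sigma> \<Longrightarrow> mset (f \<pi>) = mset \<pi>"
proof -
  from assms obtain f
    where bij: "bij_betw f {w. rgf w \<and> \<not> contains w \<sigma>} {w. rgf w \<and> \<not> contains w \<tau>}"
      and sizes: "\<And>\<pi> i. rgf \<pi> \<Longrightarrow> \<not> contains \<pi> \<sigma> \<Longrightarrow> card (block (f \<pi>) i) = card (block \<pi> i)"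
    unfolding strongly_equiv_def by blast
  have "mset (f \<pi>) = mset \<pi>" if "rgf \<pi>" "\<not> contains \<pi> \<sigma>" for \<pi>
    using sizes[OF that] by (intro multiset_eqI) (simp add: count_mset count_list_eq_card_block)
  with bij that show ?thesis by blast
qed

theorem theorem4p5:
  fixes k a :: nat and \<sigma> \<tau> :: "nat list"
  assumes "k \<ge> 1" and "a \<ge> 1"
    and "rgf \<sigma>" and "rgf \<tau>"
    and "strongly_equiv \<sigma> \<tau>"
  shows "\<forall>n. pn n {[1..<k] @ replicate a k, \<sigma>} = pn n {[1..<k] @ replicate a k, \<tau>}"
proof
  fix n
  define \<rho> where "\<rho> = [1..<k] @ replicate a k"
  define P where "P w \<longleftrightarrow> length w = n \<and> \<not> contains w \<rho>" for w
  obtain f where bij: "bij_betw f {w. rgf w \<and> \<not> contains w \<sigma>} {w. rgf w \<and> \<not> contains w \<tau>}"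
    and mset_f: "\<And>\<pi>. rgf \<pi> \<Longrightarrow> \<not> contains \<pi> \<sigma> \<Longrightarrow> mset (f \<pi>) = mset \<pi>"
    using strongly_equiv_obtains_mset_preserving[OF assms(5)] by blast
  have "P (f \<pi>) \<longleftrightarrow> P \<pi>" if "\<pi> \<in> {w. rgf w \<and> \<not> contains w \<sigma>}" for \<pi>
  proof -
    have "rgf (f \<pi>)" using bij_betwE[OF bij] that by blast
    moreover have "mset (f \<pi>) = mset \<pi>" using mset_f that by blast
    ultimately show ?thesis
      using that rgf_contains_upt_replicate_mset_cong[OF _ _ _ assms(1,2)] mset_eq_length
      unfolding P_def \<rho>_def by (metis mem_Collect_eq)
  qed
  from card_filter_eq_if_bij_betw[where P = P, OF bij this] show "pn n {\<rho>, \<sigma>} = pn n {\<rho>, \<tau>}"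
    unfolding pn_def avoids_def P_def by (simp add: conj_commute conj_left_commute)
qed

end
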